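(* Let $(L,[\cdot,\cdot,\cdot],\alpha)$ be a 3-Hom-Lie algebra, $(V,\rho,\beta)$ a representation of it, and $T:V\to L$ an $\mathcal{O}$-operator associated to $(V,\rho,\beta)$. Then $(V,\{\cdot,\cdot,\cdot\},\beta)$ with $\{u,v,w\}=\rho(Tu,Tv)w$ for $u,v,w\in V$ is a 3-Hom-pre-Lie algebra.
   Context: A 3-Hom-Lie algebra is a triple $(L,[\cdot,\cdot,\cdot],\alpha)$ with $[\cdot,\cdot,\cdot]:\wedge^3L\to L$ skew-symmetric trilinear and $\alpha$ linear satisfying $[\alpha(x),\alpha(y),[u,v,w]]=[[x,y,u],\alpha(v),\alpha(w)]+[\alpha(u),[x,y,v],\alpha(w)]+[\alpha(u),\alpha(v),[x,y,w]]$. A representation $(V,\rho,\beta)$ of it is a vector space $V$, $\beta\in gl(V)$ and a skew-symmetric bilinear $\rho:L\wedge L\to gl(V)$ with, for all $x,y,z,u\in L$: $\rho(\alpha(x),\alpha(y))\beta=\beta\rho(x,y)$; $\rho([x,y,z],\alpha(u))\beta=\rho(\alpha(y),\alpha(z))\rho(x,u)+\rho(\alpha(z),\alpha(x))\rho(y,u)+\rho(\alpha(x),\alpha(y))\rho(z,u)$; $\rho(\alpha(x),\alpha(y))\rho(z,u)=\rho(\alpha(z),\alpha(u))\rho(x,y)+\rho([x,y,z],\alpha(u))\beta+\rho(\alpha(z),[x,y,u])\beta$. An $\mathcal{O}$-operator associated to $(V,\rho,\beta)$ is a linear map $T:V\to L$ with $\alpha\circ T=T\circ\beta$ and $[Tu,Tv,Tw]=T(\rho(Tu,Tv)w+\rho(Tv,Tw)u+\rho(Tw,Tu)v)$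 for all $u,v,w\in V$. A 3-Hom-pre-Lie algebra is $(A,\{\cdot,\cdot,\cdot\},\gamma)$ with trilinear $\{\cdot,\cdot,\cdot\}$ and linear $\gamma$ such that, with $[x,y,z]_C=\{x,y,z\}+\{y,z,x\}+\{z,x,y\}$: $\{x,y,z\}=-\{y,x,z\}$; $\{\gamma(x),\gamma(y),\{z,u,v\}\}=\{[x,y,z]_C,\gamma(u),\gamma(v)\}+\{\gamma(z),[x,y,u]_C,\gamma(v)\}+\{\gamma(z),\gamma(u),\{x,y,v\}\}$; $\{[x,y,z]_C,\gamma(u),\gamma(v)\}=\{\gamma(x),\gamma(y),\{z,u,v\}\}+\{\gamma(y),\gamma(z),\{x,u,v\}\}+\{\gamma(z),\gamma(x),\{y,u,v\}\}$. *)

theory Defs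
  imports "HOL-Analysis.Analysis"
begin

definition trilinear_map ::
  "('k::field \<Rightarrow> 'a::ab_group_add \<Rightarrow> 'a) \<Rightarrow> ('k \<Rightarrow> 'b::ab_group_add \<Rightarrow> 'b)
   \<Rightarrow> ('a \<Rightarrow> 'a \<Rightarrow> 'a \<Rightarrow> 'b) \<Rightarrow> bool" where
  "trilinear_map sA sB f \<longleftrightarrow>
     (\<forall>y z. Vector_Spaces.linear sA sB (\<lambda>x. f x y z)) \<and>
     (\<forall>x z. Vector_Spaces.linear sA sB (\<lambda>y. f x y z)) \<and>
     (\<forall>x y. Vector_Spaces.linear sA sB (\<lambda>z. f x y z))"

text \<open>A 3-Hom-Lie algebra: bracket is an alternating (i.e. defined on \<wedge>^3 L) trilinear map.\<close>
definition hom_lie3 ::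
  "('k::field \<Rightarrow> 'l::ab_group_add \<Rightarrow> 'l) \<Rightarrow> ('l \<Rightarrow> 'l \<Rightarrow> 'l \<Rightarrow> 'l) \<Rightarrow> ('l \<Rightarrow> 'l) \<Rightarrow> bool" where
  "hom_lie3 sL br \<alpha> \<longleftrightarrow>
     vector_space sL \<and>
     trilinear_map sL sL br \<and>
     (\<forall>x y z. br x x z = 0 \<and> br x y y = 0 \<and> br x y x = 0) \<and>
     Vector_Spaces.linear sL sL \<alpha> \<and>
     (\<forall>x y u v w. br (\<alpha> x) (\<alpha> y) (br u v w) =
         br (br x y u) (\<alpha> v) (\<alpha> w) + br (\<alpha> u) (br x y v) (\<alpha> w) + br (\<alpha> u) (\<alpha> v) (br x y w))"

text \<open>Representation (V, rho, beta): rho is an alternating bilinear map L x L to gl(V); bilinearity of the gl(V)-valued map is stated pointwise (equivalent, since gl(V) operations are pointwise).\<close>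
definition hom_lie3_rep ::
  "('k::field \<Rightarrow> 'l::ab_group_add \<Rightarrow> 'l) \<Rightarrow> ('l \<Rightarrow> 'l \<Rightarrow> 'l \<Rightarrow> 'l) \<Rightarrow> ('l \<Rightarrow> 'l)
   \<Rightarrow> ('k \<Rightarrow> 'v::ab_group_add \<Rightarrow> 'v) \<Rightarrow> ('l \<Rightarrow> 'l \<Rightarrow> 'v \<Rightarrow> 'v) \<Rightarrow> ('v \<Rightarrow> 'v) \<Rightarrow> bool" where
  "hom_lie3_rep sL br \<alpha> sV \<rho> \<beta> \<longleftrightarrow>
     vector_space sV \<and>
     Vector_Spaces.linear sV sV \<beta> \<and>
     (\<forall>x y. Vector_Spaces.linear sV sV (\<rho> x y)) \<and>
     (\<forall>y v. Vector_Spaces.linear sL sV (\<lambda>x. \<rho> x y v)) \<and>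
     (\<forall>x v. Vector_Spaces.linear sL sV (\<lambda>y. \<rho> x y v)) \<and>
     (\<forall>x v. \<rho> x x v = 0) \<and>
     (\<forall>x y v. \<rho> (\<alpha> x) (\<alpha> y) (\<beta> v) = \<beta> (\<rho> x y v)) \<and>
     (\<forall>x y z u v. \<rho> (br x y z) (\<alpha> u) (\<beta> v) =
        \<rho> (\<alpha> y) (\<alpha> z) (\<rho> x u v) + \<rho> (\<alpha> z) (\<alpha> x) (\<rho> y u v)
        + \<rho> (\<alpha> x) (\<alpha> y) (\<rho> z u v)) \<and>
     (\<forall>x y z u v. \<rho> (\<alpha> x) (\<alpha> y) (\<rho> z u v) =
        \<rho> (\<alpha> z) (\<alpha> u) (\<rho> x y v) + \<rho> (br x y z) (\<alpha> u) (\<beta> v)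
        + \<rho> (\<alpha> z) (br x y u) (\<beta> v))"

definition O_operator ::
  "('k::field \<Rightarrow> 'l::ab_group_add \<Rightarrow> 'l) \<Rightarrow> ('l \<Rightarrow> 'l \<Rightarrow> 'l \<Rightarrow> 'l) \<Rightarrow> ('l \<Rightarrow> 'l)
   \<Rightarrow> ('k \<Rightarrow> 'v::ab_group_add \<Rightarrow> 'v) \<Rightarrow> ('l \<Rightarrow> 'l \<Rightarrow> 'v \<Rightarrow> 'v) \<Rightarrow> ('v \<Rightarrow> 'v) \<Rightarrow> ('v \<Rightarrow> 'l) \<Rightarrow> bool" where
  "O_operator sL br \<alpha> sV \<rho> \<beta> T \<longleftrightarrow>
     Vector_Spaces.linear sV sL T \<and>
     \<alpha> \<circ> T = T \<circ> \<beta> \<and>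
     (\<forall>u v w. br (T u) (T v) (T w) =
        T (\<rho> (T u) (T v) w + \<rho> (T v) (T w) u + \<rho> (T w) (T u) v))"

definition cbr3 :: "('a \<Rightarrow> 'a \<Rightarrow> 'a \<Rightarrow> 'a::plus) \<Rightarrow> 'a \<Rightarrow> 'a \<Rightarrow> 'a \<Rightarrow> 'a" where
  "cbr3 m x y z = m x y z + m y z x + m z x y"

definition hom_pre_lie3 ::
  "('k::field \<Rightarrow> 'a::ab_group_add \<Rightarrow> 'a) \<Rightarrow> ('a \<Rightarrow> 'a \<Rightarrow> 'a \<Rightarrow> 'a) \<Rightarrow> ('a \<Rightarrow> 'a) \<Rightarrow> bool" where
  "hom_pre_lie3 sA m \<gamma> \<longleftrightarrow>
     vector_space sA \<and>
     trilinear_map sA sA m \<and>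
     Vector_Spaces.linear sA sA \<gamma> \<and>
     (\<forall>x y z. m x y z = - m y x z) \<and>
     (\<forall>x y z u v. m (\<gamma> x) (\<gamma> y) (m z u v) =
        m (cbr3 m x y z) (\<gamma> u) (\<gamma> v) + m (\<gamma> z) (cbr3 m x y u) (\<gamma> v) + m (\<gamma> z) (\<gamma> u) (m x y v)) \<and>
     (\<forall>x y z u v. m (cbr3 m x y z) (\<gamma> u) (\<gamma> v) =
        m (\<gamma> x) (\<gamma> y) (m z u v) + m (\<gamma> y) (\<gamma> z) (m x u v) + m (\<gamma> z) (\<gamma> x) (m y u v))"

end

theory Submission
  imports Defs
begin

text \<open>Transport everything along T: by the O-operator identity, T maps the commutator
  cbr3 of the induced product onto the bracket of L, and T intertwines \<beta> with \<alpha>. The two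
  Hom-pre-Lie identities then become the two compatibility conditions of the representation
  evaluated at (T x, T y, T z, T u), and skew-symmetry comes from \<rho> being alternating.\<close>

lemma alternating_bilinear_skew:
  fixes f :: "'a::ab_group_add \<Rightarrow> 'a \<Rightarrow> 'b::ab_group_add"
  assumes add_left: "\<And>a b c. f (a + b) c = f a c + f b c"
    and add_right: "\<And>a b c. f c (a + b) = f c a + f c b"
    and alternating: "\<And>a. f a a = 0"
  shows "f a b = - f b a"
proof -
  have "0 = f (a + b) (a + b)" by (rule alternating[symmetric])
  also have "\<dots> = f a a + f b a + (f a b + f b b)" by (simp only: add_left add_right)
  also have "\<dots> = f a b + f b a" by (simp add: alternating)
  finally have "f a b + f b a = 0" by (rule sym)
  then show ?thesis by (simp only: eq_neg_iff_add_eq_0)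
qed

lemma hom_lie3_rep_skew:
  assumes "hom_lie3_rep sL br \<alpha> sV \<rho> \<beta>"
  shows "\<rho> x y v = - \<rho> y x v"
proof (rule alternating_bilinear_skew[where f = "\<lambda>x y. \<rho> x y v"])
  show "\<rho> (a + b) c v = \<rho> a c v + \<rho> b c v" for a b c
    using assms unfolding hom_lie3_rep_def by (simp add: Vector_Spaces.linear_iff)
  show "\<rho> c (a + b) v = \<rho> c a v + \<rho> c b v" for a b c
    using assms unfolding hom_lie3_rep_def by (simp add: Vector_Spaces.linear_iff)
  show "\<rho> a a v = 0" for a
    using assms unfolding hom_lie3_rep_def by simp
qed

lemma O_operator_intertwines:
  assumes "O_operator sL br \<alpha> sV \<rho> \<beta> T"
  shows "T (\<beta> v) = \<alpha> (T v)"
  using assms unfolding O_operator_def by (metis comp_apply)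

lemma O_operator_cbr3:
  assumes "O_operator sL br \<alpha> sV \<rho> \<beta> T"
  shows "T (cbr3 (\<lambda>u v w. \<rho> (T u) (T v) w) x y z) = br (T x) (T y) (T z)"
  using assms unfolding O_operator_def cbr3_def by simp

lemma O_operator_trilinear_product:
  assumes "hom_lie3_rep sL br \<alpha> sV \<rho> \<beta>" and "O_operator sL br \<alpha> sV \<rho> \<beta> T"
  shows "trilinear_map sV sV (\<lambda>u v w. \<rho> (T u) (T v) w)"
proof -
  have T: "Vector_Spaces.linear sV sL T"
    using assms(2) unfolding O_operator_def by simp
  have "Vector_Spaces.linear sV sV ((\<lambda>x. \<rho> x (T y) z) \<circ> T)"
    and "Vector_Spaces.linear sV sV ((\<lambda>y. \<rho> (T x) y z) \<circ> T)"
    and "Vector_Spaces.linear sV sV (\<rho> (T x) (T y))" for x y z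
    using assms(1) unfolding hom_lie3_rep_def by (simp_all add: Vector_Spaces.linear_compose[OF T])
  then show ?thesis
    unfolding trilinear_map_def comp_def by simp
qed

lemma O_operator_pre_lie_first_identity:
  assumes "hom_lie3_rep sL br \<alpha> sV \<rho> \<beta>" and "O_operator sL br \<alpha> sV \<rho> \<beta> T"
  defines "m \<equiv> \<lambda>u v w. \<rho> (T u) (T v) w"
  shows "m (\<beta> x) (\<beta> y) (m z u v) =
    m (cbr3 m x y z) (\<beta> u) (\<beta> v) + m (\<beta> z) (cbr3 m x y u) (\<beta> v) + m (\<beta> z) (\<beta> u) (m x y v)"
proof -
  have "\<rho> (\<alpha> (T x)) (\<alpha> (T y)) (\<rho> (T z) (T u) v) =
      \<rho> (\<alpha> (T z)) (\<alpha> (T u)) (\<rho> (T x) (T y) v) + \<rho> (br (T x) (T y) (T z)) (\<alpha> (T u)) (\<beta> v)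
      + \<rho> (\<alpha> (T z)) (br (T x) (T y) (T u)) (\<beta> v)"
    using assms(1) unfolding hom_lie3_rep_def by blast
  then show ?thesis
    unfolding m_def O_operator_intertwines[OF assms(2)] O_operator_cbr3[OF assms(2)]
    by (simp only: ac_simps)
qed

lemma O_operator_pre_lie_second_identity:
  assumes "hom_lie3_rep sL br \<alpha> sV \<rho> \<beta>" and "O_operator sL br \<alpha> sV \<rho> \<beta> T"
  defines "m \<equiv> \<lambda>u v w. \<rho> (T u) (T v) w"
  shows "m (cbr3 m x y z) (\<beta> u) (\<beta> v) =
    m (\<beta> x) (\<beta> y) (m z u v) + m (\<beta> y) (\<beta> z) (m x u v) + m (\<beta> z) (\<beta> x) (m y u v)"
proof -
  have "\<rho> (br (T x) (T y) (T z)) (\<alpha> (T u)) (\<beta> v) =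
      \<rho> (\<alpha> (T y)) (\<alpha> (T z)) (\<rho> (T x) (T u) v) + \<rho> (\<alpha> (T z)) (\<alpha> (T x)) (\<rho> (T y) (T u) v)
      + \<rho> (\<alpha> (T x)) (\<alpha> (T y)) (\<rho> (T z) (T u) v)"
    using assms(1) unfolding hom_lie3_rep_def by blast
  then show ?thesis
    unfolding m_def O_operator_intertwines[OF assms(2)] O_operator_cbr3[OF assms(2)]
    by (simp only: ac_simps)
qed

theorem proposition3p6:
  fixes sL :: "'k::field \<Rightarrow> 'l::ab_group_add \<Rightarrow> 'l"
    and sV :: "'k \<Rightarrow> 'v::ab_group_add \<Rightarrow> 'v"
    and br :: "'l \<Rightarrow> 'l \<Rightarrow> 'l \<Rightarrow> 'l" and \<alpha> :: "'l \<Rightarrow> 'l"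
    and \<rho> :: "'l \<Rightarrow> 'l \<Rightarrow> 'v \<Rightarrow> 'v" and \<beta> :: "'v \<Rightarrow> 'v" and T :: "'v \<Rightarrow> 'l"
  assumes "hom_lie3 sL br \<alpha>"
    and "hom_lie3_rep sL br \<alpha> sV \<rho> \<beta>"
    and "O_operator sL br \<alpha> sV \<rho> \<beta> T"
  shows "hom_pre_lie3 sV (\<lambda>u v w. \<rho> (T u) (T v) w) \<beta>"
proof -
  have "vector_space sV" and "Vector_Spaces.linear sV sV \<beta>"
    using assms(2) unfolding hom_lie3_rep_def by simp_all
  then show ?thesis
    unfolding hom_pre_lie3_def
    using O_operator_trilinear_product[OF assms(2,3)] hom_lie3_rep_skew[OF assms(2)]
      O_operator_pre_lie_first_identity[OF assms(2,3)] O_operator_pre_lie_second_identity[OF assms(2,3)]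
    by blast
qed

end
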